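(* Let $\Omega\subset\mathbb{R}^n$ be a bounded, strictly convex domain, $\Lambda\ge1$, $K<\infty$, and let $v\in C(\overline\Omega)$ satisfy $M_\Lambda^-(D^2v)\le K$ in $\Omega$ in the viscosity sense. Suppose a paraboloid $P$ of opening $-a<0$ is tangent from below to $\Gamma^0_v$ in $\Omega$ at a point $x_0\in\Omega\setminus A_0(v)$, and suppose that for some $t>0$ the paraboloid $P+t$ is tangent from below to $v$ in $\Omega$ at a point $x_1\in\overline\Omega$ (i.e. $P+t\le v$ on $\overline\Omega$ and $P(x_1)+t=v(x_1)$). Then $x_1\in\overline\Omega\setminus A_0(v)$.
   Context: For a symmetric $n\times n$ matrix $N$, $M_\Lambda^-(N) := (\text{sum of positive eigenvalues of }N) + \Lambda\,(\text{sum of negative eigenvalues of }N)$. For $u,\varphi\in C(\overline\Omega)$, $\varphi$ is tangent from below to $u$ in $\Omega$ at $x_0$ if $\varphi\le u$ in $\overline\Omega$ and $\varphi(x_0)=u(x_0)$. $M_\Lambda^-(D^2v)\le K$ in the viscosity sense in $\Omega$ means $M_\Lambda^-(D^2\varphi(x_0))\le K$ whenever $\varphi\in C^2(\overline\Omega)$ is tangent from below to $v$ in $\Omega$ at $x_0\in\Omega$. A paraboloid of opening $a$ is a function $P^a_{y,b}(x)=\frac a2|x|^2+y\cdot x+b$ with $y\in\mathbb{R}^n$, $b\in\mathbb{R}$. For $a\ge 0$, the $a$-convex envelope of $v$ is $\Gamma^a_v(x):=\sup\{P^{-a}_{y,b}(x): y\in\mathbb{R}^n,\ b\in\mathbb{R},\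 P^{-a}_{y,b}\le v\text{ in }\overline\Omega\}$ for $x\in\overline\Omega$ (so $\Gamma^0_v$ is the convex envelope), and $A_a(v):=\{x\in\Omega: v(x)=\Gamma^a_v(x)\}$. *)

theory Defs
  imports "HOL-Analysis.Analysis" "HOL-Computational_Algebra.Polynomial"
begin

definition charpoly :: "real^'n^'n \<Rightarrow> real poly" where
  "charpoly N = det (\<chi> i j. (if i = j then [:0, 1:] else 0) - [: N$i$j :])"

text \<open>M_Lambda^-(N): sum of positive eigenvalues plus Lambda times the sum of the
  negative eigenvalues, eigenvalues counted with (algebraic) multiplicity.
  For symmetric N all roots of the characteristic polynomial are real.\<close>
definition pucci_minus :: "real \<Rightarrow> real^'n^'n \<Rightarrow> real" where
  "pucci_minus \<Lambda> N =
     (\<Sum>k\<in>{k. poly (charpoly N) k = 0}.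
        real (order k (charpoly N)) * (if k > 0 then k else \<Lambda> * k))"

text \<open>phi in C^2(closure Omega), with gradient g and Hessian H on Omega:
  derivatives up to order 2 exist in Omega and extend continuously to the closure
  (for bounded Omega: uniform continuity on Omega).\<close>
definition C2_closure_with ::
  "(real^'n) set \<Rightarrow> (real^'n \<Rightarrow> real) \<Rightarrow> (real^'n \<Rightarrow> real^'n) \<Rightarrow> (real^'n \<Rightarrow> real^'n^'n) \<Rightarrow> bool" where
  "C2_closure_with \<Omega> \<phi> g H \<longleftrightarrow>
     continuous_on (closure \<Omega>) \<phi> \<and>
     (\<forall>x\<in>\<Omega>. (\<phi> has_derivative (\<lambda>h. g x \<bullet> h)) (at x)) \<and>
     (\<forall>x\<in>\<Omega>. (g has_derivative (\<lambda>h. H x *v h)) (at x)) \<and>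
     uniformly_continuous_on \<Omega> g \<and> uniformly_continuous_on \<Omega> H"

definition tangent_below :: "(real^'n) set \<Rightarrow> (real^'n \<Rightarrow> real) \<Rightarrow> (real^'n \<Rightarrow> real) \<Rightarrow> real^'n \<Rightarrow> bool" where
  "tangent_below \<Omega> \<phi> u x0 \<longleftrightarrow> (\<forall>x\<in>closure \<Omega>. \<phi> x \<le> u x) \<and> \<phi> x0 = u x0"

definition visc_pucci_le :: "real \<Rightarrow> real \<Rightarrow> (real^'n) set \<Rightarrow> (real^'n \<Rightarrow> real) \<Rightarrow> bool" where
  "visc_pucci_le \<Lambda> K \<Omega> v \<longleftrightarrow>
     (\<forall>\<phi> g H x0. C2_closure_with \<Omega> \<phi> g H \<and> x0 \<in> \<Omega> \<and> tangent_below \<Omega> \<phi> v x0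
        \<longrightarrow> pucci_minus \<Lambda> (H x0) \<le> K)"

definition paraboloid :: "real \<Rightarrow> real^'n \<Rightarrow> real \<Rightarrow> real^'n \<Rightarrow> real" where
  "paraboloid a y b x = a / 2 * (norm x)\<^sup>2 + y \<bullet> x + b"

definition conv_env :: "real \<Rightarrow> (real^'n) set \<Rightarrow> (real^'n \<Rightarrow> real) \<Rightarrow> real^'n \<Rightarrow> real" where
  "conv_env a \<Omega> v x =
     Sup {paraboloid (-a) y b x | y b. \<forall>z\<in>closure \<Omega>. paraboloid (-a) y b z \<le> v z}"

definition contact_set :: "real \<Rightarrow> (real^'n) set \<Rightarrow> (real^'n \<Rightarrow> real) \<Rightarrow> (real^'n) set" where
  "contact_set a \<Omega> v = {x \<in> \<Omega>. v x = conv_env a \<Omega> v x}"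

definition strictly_convex_set :: "(real^'n) set \<Rightarrow> bool" where
  "strictly_convex_set \<Omega> \<longleftrightarrow> convex \<Omega> \<and>
     (\<forall>x\<in>closure \<Omega>. \<forall>y\<in>closure \<Omega>. x \<noteq> y \<longrightarrow> open_segment x y \<subseteq> \<Omega>)"

end

theory Submission
  imports Defs
begin

text \<open>Suppose x1 were a contact point, hence in \<Omega>. The convex envelope then has a supporting
  affine function \<ell> at x1 with \<ell> \<le> v, and P + t also touches v from below at x1. If the two had
  the same gradient at x1, then \<ell> - (P + t) would be the nonnegative quadratic a/2 |x - x1|^2, so
  \<ell>(x0) > P(x0) = \<Gamma>(x0), contradicting \<ell> \<le> \<Gamma>. Hence v lies above the maximum of two functions
  with different gradients at x1, i.e. above a convex kink, and below such a kink one can fit a C^2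
  function whose second derivative across the kink is as large as we like; this violates
  M^-(D^2 v) \<le> K.\<close>

definition outer_prod :: "real^'n \<Rightarrow> real^'m \<Rightarrow> real^'m^'n" where
  "outer_prod u w = (\<chi> i j. u$i * w$j)"

lemma outer_prod_mult_vector: "outer_prod u w *v h = (w \<bullet> h) *\<^sub>R u"
  by (simp add: outer_prod_def vec_eq_iff matrix_vector_mult_def inner_vec_def sum_distrib_left mult_ac)

lemma outer_prod_scaleR: "outer_prod (r *\<^sub>R u) (s *\<^sub>R w) = (r * s) *\<^sub>R outer_prod u w"
  by (simp add: outer_prod_def vec_eq_iff)

lemma transpose_outer_prod_conj:
  fixes A :: "real^'k^'n" and B :: "real^'l^'m"
  shows "transpose A ** outer_prod u w ** B = outer_prod (transpose A *v u) (transpose B *v w)"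
proof -
  have "(\<Sum>l\<in>UNIV. (\<Sum>m\<in>UNIV. A$m$i * (u$m * w$l)) * B$l$j)
      = (\<Sum>m\<in>UNIV. A$m$i * u$m) * (\<Sum>l\<in>UNIV. w$l * B$l$j)" for i j
  proof -
    have "(\<Sum>l\<in>UNIV. (\<Sum>m\<in>UNIV. A$m$i * (u$m * w$l)) * B$l$j)
        = (\<Sum>l\<in>UNIV. \<Sum>m\<in>UNIV. A$m$i * (u$m * w$l) * B$l$j)"
      by (simp add: sum_distrib_right)
    also have "\<dots> = (\<Sum>l\<in>UNIV. \<Sum>m\<in>UNIV. (A$m$i * u$m) * (w$l * B$l$j))"
      by (simp add: mult_ac)
    also have "\<dots> = (\<Sum>m\<in>UNIV. A$m$i * u$m) * (\<Sum>l\<in>UNIV. w$l * B$l$j)"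
      by (subst sum.swap) (simp add: sum_product)
    finally show ?thesis .
  qed
  then show ?thesis
    by (simp add: outer_prod_def vec_eq_iff matrix_matrix_mult_def matrix_vector_mult_def
        transpose_def mult_ac)
qed

lemma matrix_add_rdistrib: "((A::real^'m^'n) + B) ** C = A ** C + B ** C"
  by (simp add: vec_eq_iff matrix_matrix_mult_def sum.distrib distrib_right)

lemma matrix_mul_scaleR_left: "(c *\<^sub>R (A::real^'m^'n)) ** B = c *\<^sub>R (A ** B)"
  by (simp add: vec_eq_iff matrix_matrix_mult_def sum_distrib_left mult_ac)

lemma matrix_mul_scaleR_right: "(A::real^'m^'n) ** (c *\<^sub>R B) = c *\<^sub>R (A ** B)"
  by (simp add: vec_eq_iff matrix_matrix_mult_def sum_distrib_left mult_ac)

lemma det_scalar_plus_outer_prod_unit: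
  fixes u :: "real^'n"
  assumes "norm u = 1"
  shows "det (c *\<^sub>R mat 1 + k *\<^sub>R outer_prod u u) = c ^ (CARD('n) - 1) * (c + k)"
proof -
  fix i0 :: 'n
  obtain A where A: "orthogonal_matrix A" "A *v axis i0 1 = u"
    using orthogonal_matrix_exists_basis assms by metis
  have TA: "transpose A ** A = mat 1"
    using A(1) orthogonal_matrix_def by blast
  have Tu: "transpose A *v u = axis i0 1"
    using A(2) TA by (metis matrix_vector_mul_assoc matrix_vector_mul_lid)
  have "transpose A ** (c *\<^sub>R mat 1 + k *\<^sub>R outer_prod u u) ** A
      = c *\<^sub>R (transpose A ** A) + k *\<^sub>R (transpose A ** outer_prod u u ** A)"
    by (simp add: matrix_add_ldistrib matrix_add_rdistrib matrix_mul_scaleR_left matrix_mul_scaleR_right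
        matrix_mul_assoc)
  also have "\<dots> = c *\<^sub>R mat 1 + k *\<^sub>R outer_prod (axis i0 1) (axis i0 1)"
    unfolding transpose_outer_prod_conj Tu TA ..
  finally have conj: "transpose A ** (c *\<^sub>R mat 1 + k *\<^sub>R outer_prod u u) ** A
      = c *\<^sub>R mat 1 + k *\<^sub>R outer_prod (axis i0 1) (axis i0 1)" .
  have "det A * det A = 1"
    using det_orthogonal_matrix[OF A(1)] by auto
  then have "det (c *\<^sub>R mat 1 + k *\<^sub>R outer_prod u u)
      = det (transpose A ** (c *\<^sub>R mat 1 + k *\<^sub>R outer_prod u u) ** A)"
    by (simp add: det_mul mult.commute mult.left_commute)
  also have "\<dots> = det (c *\<^sub>R mat 1 + k *\<^sub>R outer_prod (axis i0 1) (axis i0 1) :: real^'n^'n)"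
    unfolding conj ..
  also have "\<dots> = (\<Prod>i\<in>UNIV. if i = i0 then c + k else c)"
    by (subst det_diagonal) (auto simp: outer_prod_def axis_def mat_def intro!: prod.cong)
  also have "\<dots> = (c + k) * (\<Prod>i\<in>UNIV - {i0}. c)"
    by (subst prod.remove[of UNIV i0]) (auto intro!: prod.cong)
  also have "\<dots> = c ^ (CARD('n) - 1) * (c + k)"
    by (simp add: card_Diff_singleton)
  finally show ?thesis .
qed

lemma det_scalar_plus_outer_prod:
  fixes e :: "real^'n"
  shows "det (c *\<^sub>R mat 1 + k *\<^sub>R outer_prod e e) = c ^ (CARD('n) - 1) * (c + k * (e \<bullet> e))"
proof (cases "e = 0")
  case True
  have "det (c *\<^sub>R mat 1 :: real^'n^'n) = c ^ CARD('n)"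
    by (subst det_diagonal) (simp_all add: mat_def)
  moreover have "c ^ CARD('n) = c ^ (CARD('n) - 1) * c"
    by (simp add: power_eq_if)
  moreover have "outer_prod e e = (0::real^'n^'n)"
    using True by (simp add: outer_prod_def vec_eq_iff)
  ultimately show ?thesis
    using True by simp
next
  case False
  define u where "u = e /\<^sub>R norm e"
  have "e = norm e *\<^sub>R u"
    using False by (simp add: u_def)
  then have "outer_prod e e = (norm e)\<^sup>2 *\<^sub>R outer_prod u u"
    by (metis outer_prod_scaleR power2_eq_square)
  then show ?thesis
    using det_scalar_plus_outer_prod_unit[of u c "k * (e \<bullet> e)"] False
    by (simp add: u_def power2_norm_eq_inner)
qed

lemma poly_det: "poly (det (M::real poly^'n^'n)) x = det (\<chi> i j. poly (M$i$j) x)"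
  unfolding det_def by (simp add: poly_sum poly_prod)

lemma charpoly_scalar_plus_outer_prod:
  fixes e :: "real^'n"
  shows "charpoly (c *\<^sub>R mat 1 + k *\<^sub>R outer_prod e e)
       = [:-c, 1:] ^ (CARD('n) - 1) * [:-(c + k * (e \<bullet> e)), 1:]"
proof (rule poly_eq_poly_eq_iff[THEN iffD1], rule ext)
  fix x
  have "poly (charpoly (c *\<^sub>R mat 1 + k *\<^sub>R outer_prod e e)) x
      = det ((x - c) *\<^sub>R mat 1 + (- k) *\<^sub>R outer_prod e e)"
    unfolding charpoly_def poly_det
    by (intro arg_cong[where f=det]) (simp add: vec_eq_iff mat_def outer_prod_def algebra_simps)
  also have "\<dots> = (x - c) ^ (CARD('n) - 1) * (x - c - k * (e \<bullet> e))"
    using det_scalar_plus_outer_prod[of "x - c" "- k" e] by simp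
  finally show "poly (charpoly (c *\<^sub>R mat 1 + k *\<^sub>R outer_prod e e)) x
      = poly ([:-c, 1:] ^ (CARD('n) - 1) * [:-(c + k * (e \<bullet> e)), 1:]) x"
    by (simp add: poly_power algebra_simps)
qed

lemma pucci_minus_scalar_plus_outer_prod:
  fixes e :: "real^'n"
  assumes "c < 0" and "c + k * (e \<bullet> e) > 0"
  shows "pucci_minus \<Lambda> (c *\<^sub>R mat 1 + k *\<^sub>R outer_prod e e)
       = real (CARD('n) - 1) * (\<Lambda> * c) + (c + k * (e \<bullet> e))"
proof -
  define d where "d = c + k * (e \<bullet> e)"
  define P where "P = [:-c, 1:] ^ (CARD('n) - 1) * [:-d, 1:]"
  have cd: "c \<noteq> d"
    using assms unfolding d_def by linarith
  have P0: "P \<noteq> 0"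
    unfolding P_def by (intro no_zero_divisors power_not_zero) simp_all
  have roots: "{x. poly P x = 0} \<subseteq> {c, d}"
    by (auto simp: P_def poly_power)
  have order_c: "order c P = CARD('n) - 1"
    using order_mult[OF P0[unfolded P_def]] order_power_n_n[of c "CARD('n) - 1"] cd
    by (simp add: P_def order_0I)
  have order_d: "order d P = 1"
    using order_mult[OF P0[unfolded P_def]] order_power_n_n[of d 1] cd
    by (simp add: P_def order_0I poly_power)
  have "pucci_minus \<Lambda> (c *\<^sub>R mat 1 + k *\<^sub>R outer_prod e e)
      = (\<Sum>x\<in>{x. poly P x = 0}. real (order x P) * (if x > 0 then x else \<Lambda> * x))"
    unfolding pucci_minus_def charpoly_scalar_plus_outer_prod P_def d_def ..
  also have "\<dots> = (\<Sum>x\<in>{c, d}. real (order x P) * (if x > 0 then x else \<Lambda> * x))"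
    by (rule sum.mono_neutral_left) (use roots in \<open>auto simp: order_0I\<close>)
  also have "\<dots> = real (CARD('n) - 1) * (\<Lambda> * c) + d"
    using cd order_c order_d assms by (simp add: d_def)
  finally show ?thesis
    unfolding d_def .
qed

text \<open>With h = z - x and s = e \<bullet> h, the quartic term keeps \<alpha> s^2 - \<alpha>^3 s^4 below |s|, so this
  function fits under the kink max (c + (m + e) \<bullet> h) (c + (m - e) \<bullet> h - a/2 |h|^2), while its
  Hessian at x is -a I + 2 \<alpha> e e^T.\<close>
definition kink_test :: "real \<Rightarrow> real \<Rightarrow> real \<Rightarrow> real^'n \<Rightarrow> real^'n \<Rightarrow> real^'n \<Rightarrow> real^'n \<Rightarrow> real"
  where "kink_test a \<alpha> c m e x z =
    c + m \<bullet> (z - x) - a / 2 * ((z - x) \<bullet> (z - x)) + \<alpha> * (e \<bullet> (z - x))\<^sup>2 - \<alpha> ^ 3 * (e \<bullet> (z - x)) ^ 4"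

lemma square_minus_quartic_le_abs:
  fixes \<alpha> s :: real
  assumes "\<alpha> > 0"
  shows "\<alpha> * s\<^sup>2 - \<alpha> ^ 3 * s ^ 4 \<le> \<bar>s\<bar>"
proof (cases "\<alpha> * \<bar>s\<bar> \<le> 1")
  case True
  have "\<alpha> * s\<^sup>2 = \<bar>s\<bar> * (\<alpha> * \<bar>s\<bar>)"
    by (simp add: power2_eq_square mult_ac abs_mult_self_eq)
  also have "\<dots> \<le> \<bar>s\<bar>"
    using True mult_left_mono[OF True, of "\<bar>s\<bar>"] by simp
  finally have "\<alpha> * s\<^sup>2 \<le> \<bar>s\<bar>" .
  moreover have "\<alpha> ^ 3 * s ^ 4 \<ge> 0"
    using assms by simp
  ultimately show ?thesis
    by linarith
next
  case False
  then have "1 \<le> (\<alpha> * \<bar>s\<bar>)\<^sup>2"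
    by (simp add: one_le_power)
  then have "\<alpha> * s\<^sup>2 \<le> (\<alpha> * s\<^sup>2) * (\<alpha> * \<bar>s\<bar>)\<^sup>2"
    using mult_left_mono[OF \<open>1 \<le> (\<alpha> * \<bar>s\<bar>)\<^sup>2\<close>, of "\<alpha> * s\<^sup>2"] assms by simp
  also have "\<dots> = \<alpha> ^ 3 * s ^ 4"
    by (simp add: power2_eq_square power3_eq_cube power4_eq_xxxx mult_ac abs_mult_self_eq)
  finally show ?thesis
    by simp
qed

lemma kink_test_le_max:
  assumes "\<alpha> > 0" and "a \<ge> 0"
  shows "kink_test a \<alpha> c m e x z
    \<le> max (c + (m + e) \<bullet> (z - x)) (c + (m - e) \<bullet> (z - x) - a / 2 * ((z - x) \<bullet> (z - x)))"
proof -
  have "kink_test a \<alpha> c m e x z \<le> c + m \<bullet> (z - x) - a / 2 * ((z - x) \<bullet> (z - x)) + \<bar>e \<bullet> (z - x)\<bar>"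
    using square_minus_quartic_le_abs[OF assms(1), of "e \<bullet> (z - x)"] by (simp add: kink_test_def)
  moreover have "a / 2 * ((z - x) \<bullet> (z - x)) \<ge> 0"
    using assms(2) by simp
  ultimately show ?thesis
    by (simp add: inner_add_left inner_diff_left abs_if split: if_splits)
qed

lemma scalar_plus_outer_prod_mult_vector:
  "(c *\<^sub>R mat 1 + k *\<^sub>R outer_prod e e) *v h = c *\<^sub>R h + (k * (e \<bullet> h)) *\<^sub>R e"
  by (simp add: matrix_vector_mult_add_rdistrib scaleR_matrix_vector_assoc[symmetric]
      outer_prod_mult_vector)

lemma C2_closure_kink_test:
  fixes \<Omega> :: "(real^'n) set"
  assumes "bounded \<Omega>"
  shows "C2_closure_with \<Omega> (kink_test a \<alpha> c m e x)
     (\<lambda>z. m - a *\<^sub>R (z - x) + (2 * \<alpha> * (e \<bullet> (z - x)) - 4 * \<alpha> ^ 3 * (e \<bullet> (z - x)) ^ 3) *\<^sub>R e)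
     (\<lambda>z. (- a) *\<^sub>R mat 1 + (2 * \<alpha> - 12 * \<alpha> ^ 3 * (e \<bullet> (z - x))\<^sup>2) *\<^sub>R outer_prod e e)"
proof -
  have uc: "uniformly_continuous_on \<Omega> f"
    if "continuous_on (closure \<Omega>) f" for f :: "real^'n \<Rightarrow> 'b::metric_space"
    using compact_uniformly_continuous[OF that] assms closure_subset
    unfolding uniformly_continuous_on_def by (meson compact_closure subsetD)
  show ?thesis
    unfolding C2_closure_with_def kink_test_def
  proof (intro conjI ballI uc)
    fix z
    show "((\<lambda>z. c + m \<bullet> (z - x) - a / 2 * ((z - x) \<bullet> (z - x)) + \<alpha> * (e \<bullet> (z - x))\<^sup>2
          - \<alpha> ^ 3 * (e \<bullet> (z - x)) ^ 4) has_derivative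
       (\<lambda>h. (m - a *\<^sub>R (z - x) + (2 * \<alpha> * (e \<bullet> (z - x)) - 4 * \<alpha> ^ 3 * (e \<bullet> (z - x)) ^ 3) *\<^sub>R e) \<bullet> h))
       (at z)"
      by (auto intro!: derivative_eq_intros simp: fun_eq_iff inner_add_left inner_diff_left
          inner_diff_right inner_commute algebra_simps power2_eq_square power3_eq_cube)
    show "((\<lambda>z. m - a *\<^sub>R (z - x) + (2 * \<alpha> * (e \<bullet> (z - x)) - 4 * \<alpha> ^ 3 * (e \<bullet> (z - x)) ^ 3) *\<^sub>R e)
        has_derivative (\<lambda>h. ((- a) *\<^sub>R mat 1
          + (2 * \<alpha> - 12 * \<alpha> ^ 3 * (e \<bullet> (z - x))\<^sup>2) *\<^sub>R outer_prod e e) *v h)) (at z)"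
      unfolding scalar_plus_outer_prod_mult_vector
      by (auto intro!: derivative_eq_intros simp: fun_eq_iff inner_add_left inner_diff_left
          inner_diff_right inner_commute algebra_simps power2_eq_square power3_eq_cube)
  qed (intro continuous_intros)+
qed

lemma visc_pucci_le_no_convex_kink:
  fixes \<Omega> :: "(real^'n) set" and v :: "real^'n \<Rightarrow> real" and p q x :: "real^'n"
  assumes visc: "visc_pucci_le \<Lambda> K \<Omega> v" and "bounded \<Omega>" and "x \<in> \<Omega>"
    and "\<Lambda> \<ge> 0" and "a > 0"
    and affine_below: "\<forall>z\<in>closure \<Omega>. v x + p \<bullet> (z - x) \<le> v z"
    and concave_below: "\<forall>z\<in>closure \<Omega>. v x + q \<bullet> (z - x) - a / 2 * ((z - x) \<bullet> (z - x)) \<le> v z"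
  shows "p = q"
proof (rule ccontr)
  assume "p \<noteq> q"
  define e where "e = (1 / 2) *\<^sub>R (p - q)"
  define m where "m = (1 / 2) *\<^sub>R (p + q)"
  have ee: "e \<bullet> e > 0"
    using \<open>p \<noteq> q\<close> by (simp add: e_def)
  \<comment> \<open>\<alpha> is chosen so that M^- of the Hessian of the test function at x is |K| + 1.\<close>
  define \<beta> where "\<beta> = \<bar>K\<bar> + 1 + a + real (CARD('n) - 1) * (\<Lambda> * a)"
  define \<alpha> where "\<alpha> = \<beta> / (2 * (e \<bullet> e))"
  have "real (CARD('n) - 1) * (\<Lambda> * a) \<ge> 0"
    using assms(4,5) by simp
  then have "\<beta> > a"
    unfolding \<beta>_def by linarith
  then have "\<alpha> > 0" and two_\<alpha>: "2 * \<alpha> * (e \<bullet> e) = \<beta>"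
    using ee assms(5) by (simp_all add: \<alpha>_def)
  define H where "H z = (- a) *\<^sub>R mat 1 + (2 * \<alpha> - 12 * \<alpha> ^ 3 * (e \<bullet> (z - x))\<^sup>2) *\<^sub>R outer_prod e e"
    for z :: "real^'n"
  have "tangent_below \<Omega> (kink_test a \<alpha> (v x) m e x) v x"
    unfolding tangent_below_def
  proof
    have "m + e = p" "m - e = q"
      by (simp_all add: m_def e_def vec_eq_iff field_simps)
    then show "\<forall>z\<in>closure \<Omega>. kink_test a \<alpha> (v x) m e x z \<le> v z"
      using kink_test_le_max[OF \<open>\<alpha> > 0\<close>, of a "v x" m e x] assms(5) affine_below concave_below
      by (smt (verit))
  qed (simp add: kink_test_def)
  then have "pucci_minus \<Lambda> (H x) \<le> K"
    using visc C2_closure_kink_test[OF assms(2)] assms(3) unfolding visc_pucci_le_def H_def by blast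
  moreover have "pucci_minus \<Lambda> (H x) = real (CARD('n) - 1) * (\<Lambda> * (- a)) + (- a + 2 * \<alpha> * (e \<bullet> e))"
    unfolding H_def using pucci_minus_scalar_plus_outer_prod[of "- a" "2 * \<alpha>" e \<Lambda>] two_\<alpha> \<open>\<beta> > a\<close> assms(5)
    by simp
  ultimately show False
    unfolding two_\<alpha> \<beta>_def by simp
qed

lemma paraboloid_expand:
  "paraboloid a y b z = paraboloid a y b x + (y + a *\<^sub>R x) \<bullet> (z - x) + a / 2 * ((z - x) \<bullet> (z - x))"
  unfolding paraboloid_def
  by (simp add: power2_norm_eq_inner inner_diff_left inner_diff_right inner_add_left inner_commute
      algebra_simps)

lemma tangent_paraboloid_minorant:
  assumes "tangent_below \<Omega> (\<lambda>x. paraboloid (-a) y b x + t) v x1"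
  shows "\<forall>z\<in>closure \<Omega>. v x1 + (y - a *\<^sub>R x1) \<bullet> (z - x1) - a / 2 * ((z - x1) \<bullet> (z - x1)) \<le> v z"
proof
  fix z
  assume "z \<in> closure \<Omega>"
  moreover have "paraboloid (-a) y b z = paraboloid (-a) y b x1 + (y - a *\<^sub>R x1) \<bullet> (z - x1)
      - a / 2 * ((z - x1) \<bullet> (z - x1))"
    using paraboloid_expand[of "-a" y b z x1] by simp
  ultimately show "v x1 + (y - a *\<^sub>R x1) \<bullet> (z - x1) - a / 2 * ((z - x1) \<bullet> (z - x1)) \<le> v z"
    using assms unfolding tangent_below_def by fastforce
qed

lemma conv_env_zero_eq:
  "conv_env 0 \<Omega> v x = Sup {y \<bullet> x + b | y b. \<forall>z\<in>closure \<Omega>. y \<bullet> z + b \<le> v z}"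
  unfolding conv_env_def paraboloid_def by simp

lemma affine_le_conv_env:
  assumes "\<forall>z\<in>closure \<Omega>. y \<bullet> z + b \<le> v z" and "x \<in> closure \<Omega>"
  shows "y \<bullet> x + b \<le> conv_env 0 \<Omega> v x"
  unfolding conv_env_zero_eq
proof (rule cSup_upper)
  show "bdd_above {y \<bullet> x + b | y b. \<forall>z\<in>closure \<Omega>. y \<bullet> z + b \<le> v z}"
    using assms(2) by (auto simp: bdd_above_def intro!: exI[of _ "v x"])
qed (use assms(1) in blast)

lemma conv_env_approx:
  assumes "bdd_below (v ` closure \<Omega>)" and "x \<in> closure \<Omega>" and "\<epsilon> > 0"
  obtains y b where "\<forall>z\<in>closure \<Omega>. y \<bullet> z + b \<le> v z" and "conv_env 0 \<Omega> v x - \<epsilon> < y \<bullet> x + b"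
proof -
  define S where "S = {y \<bullet> x + b | y b. \<forall>z\<in>closure \<Omega>. y \<bullet> z + b \<le> v z}"
  obtain B where "\<forall>z\<in>closure \<Omega>. B \<le> v z"
    using assms(1) by (auto simp: bdd_below_def)
  then have "0 \<bullet> x + B \<in> S"
    unfolding S_def by (intro CollectI exI[of _ 0] exI[of _ B]) simp
  moreover have "bdd_above S"
    using assms(2) by (auto simp: S_def bdd_above_def intro!: exI[of _ "v x"])
  moreover have "conv_env 0 \<Omega> v x - \<epsilon> < Sup S"
    using assms(3) by (simp add: S_def conv_env_zero_eq)
  ultimately obtain s where "s \<in> S" "conv_env 0 \<Omega> v x - \<epsilon> < s"
    using less_cSup_iff by blast
  then show ?thesis
    using that unfolding S_def by blast
qed

lemma affine_minorant_slope_bound: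
  fixes y x :: "real^'n"
  assumes "r > 0" and "ball x r \<subseteq> closure \<Omega>" and "\<forall>z\<in>closure \<Omega>. v z \<le> B"
    and "\<forall>z\<in>closure \<Omega>. c + y \<bullet> (z - x) \<le> v z"
  shows "r / 2 * norm y \<le> B - c"
proof (cases "y = 0")
  case True
  have "x \<in> closure \<Omega>"
    using assms(1,2) by auto
  then show ?thesis
    using True assms(3,4) by fastforce
next
  case False
  define z where "z = x + (r / 2 / norm y) *\<^sub>R y"
  have "z \<in> ball x r"
    using False assms(1) by (simp add: z_def dist_norm)
  then have "c + y \<bullet> (z - x) \<le> B"
    using assms(2-4) by (meson order_trans subsetD)
  moreover have "y \<bullet> (z - x) = r / 2 * norm y"
    using False by (simp add: z_def power2_norm_eq_inner[symmetric] power2_eq_square)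
  ultimately show ?thesis
    by simp
qed

text \<open>The supporting function is a limit of nearly optimal affine minorants; their slopes
  stay bounded because x is an interior point.\<close>
lemma conv_env_supporting_affine:
  fixes \<Omega> :: "(real^'n) set" and v :: "real^'n \<Rightarrow> real"
  assumes "bounded (v ` closure \<Omega>)" and "x \<in> interior \<Omega>"
  obtains p where "\<forall>z\<in>closure \<Omega>. conv_env 0 \<Omega> v x + p \<bullet> (z - x) \<le> v z"
proof -
  define c where "c = conv_env 0 \<Omega> v x"
  obtain B where B: "\<forall>z\<in>closure \<Omega>. \<bar>v z\<bar> \<le> B"
    using assms(1) unfolding bounded_real by auto
  obtain r where r: "r > 0" "ball x r \<subseteq> closure \<Omega>"
    using assms(2) closure_subset by (meson mem_interior order_trans)
  have x: "x \<in> closure \<Omega>"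
    using r by auto
  have "\<exists>Y. \<forall>z\<in>closure \<Omega>. c - inverse (Suc k) + Y \<bullet> (z - x) \<le> v z" for k
  proof -
    have "bdd_below (v ` closure \<Omega>)"
      using assms(1) by (simp add: bounded_imp_bdd_below)
    then obtain Y b where "\<forall>z\<in>closure \<Omega>. Y \<bullet> z + b \<le> v z" "c - inverse (Suc k) < Y \<bullet> x + b"
      using conv_env_approx x unfolding c_def by (metis inverse_positive_iff_positive of_nat_0_less_iff zero_less_Suc)
    then show ?thesis
      by (intro exI[of _ Y]) (auto simp: inner_diff_right intro: order_trans[rotated])
  qed
  then obtain Y where Y: "\<And>k. \<forall>z\<in>closure \<Omega>. c - inverse (Suc k) + Y k \<bullet> (z - x) \<le> v z"
    by metis
  have "Y k \<in> cball 0 (2 * (B - c + 1) / r)" for k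
  proof -
    have "r / 2 * norm (Y k) \<le> B - (c - inverse (Suc k))"
      by (rule affine_minorant_slope_bound[OF r, where v=v]) (use B Y in \<open>auto simp: abs_le_iff\<close>)
    moreover have "inverse (Suc k) \<le> 1"
      by (rule inverse_le_1_iff[THEN iffD2]) simp
    ultimately have "r / 2 * norm (Y k) \<le> B - c + 1"
      by linarith
    then show ?thesis
      using r(1) by (simp add: field_simps)
  qed
  then obtain p \<sigma> where "strict_mono \<sigma>" "(Y \<circ> \<sigma>) \<longlonglongrightarrow> p"
    using compact_cball[THEN compact_imp_seq_compact, unfolded seq_compact_def] by metis
  have "c + p \<bullet> (z - x) \<le> v z" if "z \<in> closure \<Omega>" for z
  proof -
    have "(\<lambda>k. inverse (real (Suc (\<sigma> k)))) \<longlonglongrightarrow> 0"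
      using LIMSEQ_subseq_LIMSEQ[OF LIMSEQ_inverse_real_of_nat \<open>strict_mono \<sigma>\<close>] by (simp add: o_def)
    then have "(\<lambda>k. c - inverse (real (Suc (\<sigma> k))) + Y (\<sigma> k) \<bullet> (z - x)) \<longlonglongrightarrow> c - 0 + p \<bullet> (z - x)"
      using \<open>(Y \<circ> \<sigma>) \<longlonglongrightarrow> p\<close> by (intro tendsto_intros) (simp_all add: o_def)
    then have "c - 0 + p \<bullet> (z - x) \<le> v z"
      by (rule LIMSEQ_le_const2) (use Y that in blast)
    then show ?thesis
      by simp
  qed
  then show ?thesis
    using that unfolding c_def by blast
qed

theorem lemma3p1:
  fixes \<Omega> :: "(real^'n) set" and v :: "real^'n \<Rightarrow> real"
    and \<Lambda> K a t b :: real and y x0 x1 :: "real^'n"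
  assumes "open \<Omega>" and "connected \<Omega>" and "\<Omega> \<noteq> {}" and "bounded \<Omega>"
    and "strictly_convex_set \<Omega>"
    and "\<Lambda> \<ge> 1"
    and "continuous_on (closure \<Omega>) v"
    and "visc_pucci_le \<Lambda> K \<Omega> v"
    and "a > 0"
    and "x0 \<in> \<Omega> - contact_set 0 \<Omega> v"
    and "tangent_below \<Omega> (paraboloid (-a) y b) (conv_env 0 \<Omega> v) x0"
    and "t > 0" and "x1 \<in> closure \<Omega>"
    and "tangent_below \<Omega> (\<lambda>x. paraboloid (-a) y b x + t) v x1"
  shows "x1 \<in> closure \<Omega> - contact_set 0 \<Omega> v"
proof (rule ccontr)
  assume "x1 \<notin> closure \<Omega> - contact_set 0 \<Omega> v"
  then have "x1 \<in> \<Omega>" and contact: "conv_env 0 \<Omega> v x1 = v x1"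
    using assms(13) unfolding contact_set_def by auto
  define P where "P = paraboloid (-a) y b"
  define q where "q = y - a *\<^sub>R x1"
  have P_expand: "P z = P x1 + q \<bullet> (z - x1) - a / 2 * ((z - x1) \<bullet> (z - x1))" for z
    using paraboloid_expand[of "-a" y b z x1] by (simp add: P_def q_def)
  have P_x1: "P x1 + t = v x1"
    using assms(14) unfolding tangent_below_def P_def by simp
  have "bounded (v ` closure \<Omega>)"
    using assms(4,7) by (simp add: compact_imp_bounded compact_continuous_image)
  then obtain p where p: "\<forall>z\<in>closure \<Omega>. v x1 + p \<bullet> (z - x1) \<le> v z"
    using conv_env_supporting_affine[of v \<Omega> x1] \<open>x1 \<in> \<Omega>\<close> assms(1) contact
    by (auto simp: interior_open)
  have "\<forall>z\<in>closure \<Omega>. v x1 + q \<bullet> (z - x1) - a / 2 * ((z - x1) \<bullet> (z - x1)) \<le> v z"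
    using tangent_paraboloid_minorant[OF assms(14)] unfolding q_def .
  then have "p = q"
    using visc_pucci_le_no_convex_kink[OF assms(8,4) \<open>x1 \<in> \<Omega>\<close> _ assms(9) p] assms(6) by simp
  then have "q \<bullet> x0 + (v x1 - q \<bullet> x1) \<le> conv_env 0 \<Omega> v x0"
    using p assms(10) closure_subset
    by (intro affine_le_conv_env) (auto simp: inner_diff_right algebra_simps)
  moreover have "P x0 = conv_env 0 \<Omega> v x0"
    using assms(11) unfolding tangent_below_def P_def by simp
  moreover have "a / 2 * ((x0 - x1) \<bullet> (x0 - x1)) \<ge> 0"
    using assms(9) by simp
  ultimately show False
    using P_expand[of x0] P_x1 assms(12) by (simp add: inner_diff_right)
qed

end
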